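(* In the CCV $\lambda\mu$-calculus, the reduction relation consisting only of vertical reductions $\mu k.[k]M\to M$ (with $k$ not free in $M$) is strongly normalizing and confluent.
   Context: CCV $\lambda\mu$-calculus. Ordinary variables $x,y,\dots$ and continuation variables $k,l,\dots$ are disjoint. Terms $M ::= x \mid \lambda x.M \mid MM \mid (M\ \mathsf{where}\ x:=M) \mid \mu k.J$, jumps $J ::= [k]M \mid (J\ \mathsf{where}\ x:=M)$, where $(L\ \mathsf{where}\ x:=M)$ means $\mathsf{let}\ x=M\ \mathsf{in}\ L$ ($x$ bound in $L$ only); terms are identified up to $\alpha$-conversion and the congruence generated by (E1) $(L\ \mathsf{where}\ x:=(M\ \mathsf{where}\ y:=N))=((L\ \mathsf{where}\ x:=M)\ \mathsf{where}\ y:=N)$ if $y$ not free in $L$; (E2) $((\mu k.J)\ \mathsf{where}\ x:=M)=\mu k.(J\ \mathsf{where}\ x:=M)$ if $k$ not free in $M$; (E3) $[k](L\ \mathsf{where}\ x:=M)=([k]L\ \mathsf{where}\ x:=M)$. A vertical reduction is the contraction of a subterm $\mu k.[k]M$ with $k$ not free in $M$ to $M$, anywhere inside a term or jump. *)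

theory Defs
  imports Main
begin

text \<open>Ordinary variables and continuation variables are both represented by
natural numbers, but they occur in syntactically disjoint positions
(ordinary: Var, Lam, where-binders; continuation: Mu binder and jump target),
so the two name spaces are disjoint.\<close>

type_synonym var = nat
type_synonym cvar = nat

datatype trm =
    Var var
  | Lam var trm
  | App trm trm
  | TWhere trm var trm   (* (L where x := M): x bound in L only *)
  | Mu cvar jmp
and jmp =
    Jmp cvar trm          (* [k]M *)
  | JWhere jmp var trm   (* (J where x := M): x bound in J only *)

primrec fv_t :: "trm \<Rightarrow> var set" and fv_j :: "jmp \<Rightarrow> var set" where
  "fv_t (Var x) = {x}"
| "fv_t (Lam x M) = fv_t M - {x}"
| "fv_t (App M N) = fv_t M \<union> fv_t N"
| "fv_t (TWhere L x M) = (fv_t L - {x}) \<union> fv_t M"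
| "fv_t (Mu k J) = fv_j J"
| "fv_j (Jmp k M) = fv_t M"
| "fv_j (JWhere J x M) = (fv_j J - {x}) \<union> fv_t M"

primrec fcv_t :: "trm \<Rightarrow> cvar set" and fcv_j :: "jmp \<Rightarrow> cvar set" where
  "fcv_t (Var x) = {}"
| "fcv_t (Lam x M) = fcv_t M"
| "fcv_t (App M N) = fcv_t M \<union> fcv_t N"
| "fcv_t (TWhere L x M) = fcv_t L \<union> fcv_t M"
| "fcv_t (Mu k J) = fcv_j J - {k}"
| "fcv_j (Jmp k M) = insert k (fcv_t M)"
| "fcv_j (JWhere J x M) = fcv_j J \<union> fcv_t M"

definition sw :: "nat \<Rightarrow> nat \<Rightarrow> nat \<Rightarrow> nat" where
  "sw a b c = (if c = a then b else if c = b then a else c)"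

primrec swp_t :: "var \<Rightarrow> var \<Rightarrow> trm \<Rightarrow> trm" and swp_j :: "var \<Rightarrow> var \<Rightarrow> jmp \<Rightarrow> jmp" where
  "swp_t a b (Var x) = Var (sw a b x)"
| "swp_t a b (Lam x M) = Lam (sw a b x) (swp_t a b M)"
| "swp_t a b (App M N) = App (swp_t a b M) (swp_t a b N)"
| "swp_t a b (TWhere L x M) = TWhere (swp_t a b L) (sw a b x) (swp_t a b M)"
| "swp_t a b (Mu k J) = Mu k (swp_j a b J)"
| "swp_j a b (Jmp k M) = Jmp k (swp_t a b M)"
| "swp_j a b (JWhere J x M) = JWhere (swp_j a b J) (sw a b x) (swp_t a b M)"

primrec cswp_t :: "cvar \<Rightarrow> cvar \<Rightarrow> trm \<Rightarrow> trm" and cswp_j :: "cvar \<Rightarrow> cvar \<Rightarrow> jmp \<Rightarrow> jmp" where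
  "cswp_t a b (Var x) = Var x"
| "cswp_t a b (Lam x M) = Lam x (cswp_t a b M)"
| "cswp_t a b (App M N) = App (cswp_t a b M) (cswp_t a b N)"
| "cswp_t a b (TWhere L x M) = TWhere (cswp_t a b L) x (cswp_t a b M)"
| "cswp_t a b (Mu k J) = Mu (sw a b k) (cswp_j a b J)"
| "cswp_j a b (Jmp k M) = Jmp (sw a b k) (cswp_t a b M)"
| "cswp_j a b (JWhere J x M) = JWhere (cswp_j a b J) x (cswp_t a b M)"

inductive eq_t :: "trm \<Rightarrow> trm \<Rightarrow> bool" and eq_j :: "jmp \<Rightarrow> jmp \<Rightarrow> bool" where
  t_refl: "eq_t M M"
| t_sym: "eq_t M N \<Longrightarrow> eq_t N M"
| t_trans: "eq_t M N \<Longrightarrow> eq_t N P \<Longrightarrow> eq_t M P"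
| j_refl: "eq_j J J"
| j_sym: "eq_j J K \<Longrightarrow> eq_j K J"
| j_trans: "eq_j J K \<Longrightarrow> eq_j K L \<Longrightarrow> eq_j J L"
| c_lam: "eq_t M M' \<Longrightarrow> eq_t (Lam x M) (Lam x M')"
| c_app: "eq_t M M' \<Longrightarrow> eq_t N N' \<Longrightarrow> eq_t (App M N) (App M' N')"
| c_twhere: "eq_t L L' \<Longrightarrow> eq_t M M' \<Longrightarrow> eq_t (TWhere L x M) (TWhere L' x M')"
| c_mu: "eq_j J J' \<Longrightarrow> eq_t (Mu k J) (Mu k J')"
| c_jmp: "eq_t M M' \<Longrightarrow> eq_j (Jmp k M) (Jmp k M')"
| c_jwhere: "eq_j J J' \<Longrightarrow> eq_t M M' \<Longrightarrow> eq_j (JWhere J x M) (JWhere J' x M')"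
| a_lam: "y \<notin> fv_t M - {x} \<Longrightarrow> eq_t (Lam x M) (Lam y (swp_t x y M))"
| a_twhere: "y \<notin> fv_t L - {x} \<Longrightarrow> eq_t (TWhere L x M) (TWhere (swp_t x y L) y M)"
| a_jwhere: "y \<notin> fv_j J - {x} \<Longrightarrow> eq_j (JWhere J x M) (JWhere (swp_j x y J) y M)"
| a_mu: "l \<notin> fcv_j J - {k} \<Longrightarrow> eq_t (Mu k J) (Mu l (cswp_j k l J))"
| e1_t: "y \<notin> fv_t L \<Longrightarrow>
     eq_t (TWhere L x (TWhere M y N)) (TWhere (TWhere L x M) y N)"
| e1_j: "y \<notin> fv_j L \<Longrightarrow>
     eq_j (JWhere L x (TWhere M y N)) (JWhere (JWhere L x M) y N)"
| e2: "k \<notin> fcv_t M \<Longrightarrow> eq_t (TWhere (Mu k J) x M) (Mu k (JWhere J x M))"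
| e3: "eq_j (Jmp k (TWhere L x M)) (JWhere (Jmp k L) x M)"

inductive vstep_t :: "trm \<Rightarrow> trm \<Rightarrow> bool" and vstep_j :: "jmp \<Rightarrow> jmp \<Rightarrow> bool" where
  v_root: "k \<notin> fcv_t M \<Longrightarrow> vstep_t (Mu k (Jmp k M)) M"
| v_lam: "vstep_t M M' \<Longrightarrow> vstep_t (Lam x M) (Lam x M')"
| v_app1: "vstep_t M M' \<Longrightarrow> vstep_t (App M N) (App M' N)"
| v_app2: "vstep_t N N' \<Longrightarrow> vstep_t (App M N) (App M N')"
| v_twhere1: "vstep_t L L' \<Longrightarrow> vstep_t (TWhere L x M) (TWhere L' x M)"
| v_twhere2: "vstep_t M M' \<Longrightarrow> vstep_t (TWhere L x M) (TWhere L x M')"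
| v_mu: "vstep_j J J' \<Longrightarrow> vstep_t (Mu k J) (Mu k J')"
| v_jmp: "vstep_t M M' \<Longrightarrow> vstep_j (Jmp k M) (Jmp k M')"
| v_jwhere1: "vstep_j J J' \<Longrightarrow> vstep_j (JWhere J x M) (JWhere J' x M)"
| v_jwhere2: "vstep_t M M' \<Longrightarrow> vstep_j (JWhere J x M) (JWhere J x M')"

definition vred_t :: "trm \<Rightarrow> trm \<Rightarrow> bool" where
  "vred_t M N \<longleftrightarrow> (\<exists>M' N'. eq_t M M' \<and> vstep_t M' N' \<and> eq_t N' N)"

definition vred_j :: "jmp \<Rightarrow> jmp \<Rightarrow> bool" where
  "vred_j J K \<longleftrightarrow> (\<exists>J' K'. eq_j J J' \<and> vstep_j J' K' \<and> eq_j K' K)"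

text \<open>Many-step reduction on equivalence classes: zero steps means staying in
the same class.\<close>

definition vreds_t :: "trm \<Rightarrow> trm \<Rightarrow> bool" where
  "vreds_t = (\<lambda>M N. eq_t M N \<or> vred_t M N)\<^sup>*\<^sup>*"

definition vreds_j :: "jmp \<Rightarrow> jmp \<Rightarrow> bool" where
  "vreds_j = (\<lambda>J K. eq_j J K \<or> vred_j J K)\<^sup>*\<^sup>*"

definition SN :: "('a \<Rightarrow> 'a \<Rightarrow> bool) \<Rightarrow> bool" where
  "SN R \<longleftrightarrow> wfp (\<lambda>y x. R x y)"

definition confluent :: "('a \<Rightarrow> 'a \<Rightarrow> bool) \<Rightarrow> bool" where
  "confluent Rs \<longleftrightarrow> (\<forall>M N1 N2. Rs M N1 \<and> Rs M N2 \<longrightarrow> (\<exists>P. Rs N1 P \<and> Rs N2 P))"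

end

theory Submission
  imports Defs
begin

text \<open>Strong normalization: every vertical step erases one \<open>\<mu>\<close>-binder, and the
identifications (alpha, E1--E3) preserve the number of \<open>\<mu>\<close>-binders.

Confluence: a normalization function contracts all vertical redexes bottom-up.
Every term reduces to its normal form, and both the identifications and vertical
steps are mapped to identified normal forms; hence any two reducts of a term are
joinable at the normal form of either of them.\<close>

lemma confluent_rtranclp_if_normalizing:
  assumes reduces: "\<And>a. S\<^sup>*\<^sup>* a (f a)"
    and respects: "\<And>a b. S a b \<Longrightarrow> E (f a) (f b)"
    and "equivp E" and E_step: "\<And>a b. E a b \<Longrightarrow> S a b"
  shows "confluent S\<^sup>*\<^sup>*"
  unfolding confluent_def
proof (intro allI impI)
  fix a b c assume "S\<^sup>*\<^sup>* a b \<and> S\<^sup>*\<^sup>* a c"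
  have "E (f x) (f y)" if "S\<^sup>*\<^sup>* x y" for x y
    using that \<open>equivp E\<close>
    by (induct rule: rtranclp_induct) (auto intro: respects equivp_transp equivp_reflp)
  with \<open>S\<^sup>*\<^sup>* a b \<and> S\<^sup>*\<^sup>* a c\<close> have "E (f c) (f b)"
    by (meson \<open>equivp E\<close> equivp_symp equivp_transp)
  then have "S\<^sup>*\<^sup>* c (f b)"
    using reduces[of c] E_step by (meson rtranclp.rtrancl_into_rtrancl)
  then show "\<exists>d. S\<^sup>*\<^sup>* b d \<and> S\<^sup>*\<^sup>* c d" using reduces by blast
qed

lemma sw_inj [simp]: "sw a b x = sw a b y \<longleftrightarrow> x = y"
  by (auto simp: sw_def)

lemma sw_commute: "sw a b = sw b a"
  by (auto simp: sw_def fun_eq_iff)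

lemma cswp_commute: "cswp_t a b M = cswp_t b a M" "cswp_j a b J = cswp_j b a J"
  by (induct M and J) (auto simp: sw_commute)

lemma cswp_self [simp]: "cswp_t a a M = M" "cswp_j a a J = J"
  by (induct M and J) (auto simp: sw_def)

lemma fcv_swp [simp]: "fcv_t (swp_t a b M) = fcv_t M" "fcv_j (swp_j a b J) = fcv_j J"
  by (induct M and J) auto

lemma fcv_cswp: "fcv_t (cswp_t a b M) = sw a b ` fcv_t M" "fcv_j (cswp_j a b J) = sw a b ` fcv_j J"
  by (induct M and J) (auto simp: image_Un image_set_diff[OF inj_onI])

lemma fcv_eq: "eq_t M N \<Longrightarrow> fcv_t M = fcv_t N" "eq_j J K \<Longrightarrow> fcv_j J = fcv_j K"
proof (induct rule: eq_t_eq_j.inducts)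
  case (a_mu l J k)
  then show ?case by (auto simp: fcv_cswp sw_def split: if_splits)
qed auto

lemma eq_cswp_fresh:
  "k \<notin> fcv_t M \<Longrightarrow> l \<notin> fcv_t M \<Longrightarrow> eq_t M (cswp_t k l M)"
  "k \<notin> fcv_j J \<Longrightarrow> l \<notin> fcv_j J \<Longrightarrow> eq_j J (cswp_j k l J)"
proof (induct M and J)
  case (Mu m J)
  consider "m = k" | "m = l" | "m \<noteq> k" "m \<noteq> l" by blast
  then show ?case
  proof cases
    case 1
    then show ?thesis using Mu.prems by (auto intro: a_mu simp: sw_def)
  next
    case 2
    then have "eq_t (Mu l J) (Mu k (cswp_j l k J))" using Mu.prems by (auto intro: a_mu)
    then show ?thesis using 2 by (auto simp: sw_def cswp_commute intro: t_refl)
  next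
    case 3
    then show ?thesis using Mu by (auto intro: c_mu simp: sw_def)
  qed
qed (auto intro: eq_t_eq_j.intros simp: sw_def)

primrec mu_count_t :: "trm \<Rightarrow> nat" and mu_count_j :: "jmp \<Rightarrow> nat" where
  "mu_count_t (Var x) = 0"
| "mu_count_t (Lam x M) = mu_count_t M"
| "mu_count_t (App M N) = mu_count_t M + mu_count_t N"
| "mu_count_t (TWhere L x M) = mu_count_t L + mu_count_t M"
| "mu_count_t (Mu k J) = Suc (mu_count_j J)"
| "mu_count_j (Jmp k M) = mu_count_t M"
| "mu_count_j (JWhere J x M) = mu_count_j J + mu_count_t M"

lemma mu_count_swp [simp]:
  "mu_count_t (swp_t a b M) = mu_count_t M" "mu_count_j (swp_j a b J) = mu_count_j J"
  by (induct M and J) auto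

lemma mu_count_cswp [simp]:
  "mu_count_t (cswp_t a b M) = mu_count_t M" "mu_count_j (cswp_j a b J) = mu_count_j J"
  by (induct M and J) auto

lemma mu_count_eq:
  "eq_t M N \<Longrightarrow> mu_count_t M = mu_count_t N" "eq_j J K \<Longrightarrow> mu_count_j J = mu_count_j K"
  by (induct rule: eq_t_eq_j.inducts) auto

lemma mu_count_vstep:
  "vstep_t M N \<Longrightarrow> mu_count_t N < mu_count_t M" "vstep_j J K \<Longrightarrow> mu_count_j K < mu_count_j J"
  by (induct rule: vstep_t_vstep_j.inducts) auto

lemma SN_vred_t: "SN vred_t"
  unfolding SN_def
proof (rule wfp_if_convertible_to_nat[where f = mu_count_t])
  show "mu_count_t N < mu_count_t M" if "vred_t M N" for M N
    using that mu_count_eq(1) mu_count_vstep(1) unfolding vred_t_def by metis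
qed

lemma SN_vred_j: "SN vred_j"
  unfolding SN_def
proof (rule wfp_if_convertible_to_nat[where f = mu_count_j])
  show "mu_count_j K < mu_count_j J" if "vred_j J K" for J K
    using that mu_count_eq(2) mu_count_vstep(2) unfolding vred_j_def by metis
qed

text \<open>By (E3) every jump \<open>([k]M where x\<^sub>1 := N\<^sub>1) \<dots>\<close> is identified with
\<open>[k](M where x\<^sub>1 := N\<^sub>1 \<dots>)\<close>; these functions compute \<open>k\<close> and that body.\<close>

primrec jtarget :: "jmp \<Rightarrow> cvar" where
  "jtarget (Jmp k M) = k"
| "jtarget (JWhere J x M) = jtarget J"

primrec jbody :: "jmp \<Rightarrow> trm" where
  "jbody (Jmp k M) = M"
| "jbody (JWhere J x M) = TWhere (jbody J) x M"

lemma jtarget_jbody_swp [simp]: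
  "jtarget (swp_j a b J) = jtarget J" "jbody (swp_j a b J) = swp_t a b (jbody J)"
  "jtarget (cswp_j a b J) = sw a b (jtarget J)" "jbody (cswp_j a b J) = cswp_t a b (jbody J)"
  by (induct J rule: jmp.induct[of "\<lambda>_. True"]) auto

lemma fv_jbody [simp]: "fv_t (jbody J) = fv_j J"
  by (induct J rule: jmp.induct[of "\<lambda>_. True"]) auto

lemma fcv_jbody: "fcv_t (jbody J) \<subseteq> fcv_j J"
  by (induct J rule: jmp.induct[of "\<lambda>_. True"]) auto

lemma eq_j_Jmp_jtarget_jbody: "eq_j J (Jmp (jtarget J) (jbody J))"
proof (induct J rule: jmp.induct[of "\<lambda>_. True"])
  case (JWhere J x M)
  have "eq_j (JWhere J x M) (JWhere (Jmp (jtarget J) (jbody J)) x M)"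
    using JWhere(1) by (rule c_jwhere[OF _ t_refl])
  from j_trans[OF this j_sym[OF e3]] show ?case by simp
qed (simp_all add: j_refl)

lemma eq_j_jtarget_jbody: "eq_j J K \<Longrightarrow> jtarget J = jtarget K \<and> eq_t (jbody J) (jbody K)"
proof (induct rule: eq_t_eq_j.inducts(2)[where ?P1.0 = "\<lambda>_ _. True"])
  case (a_jwhere y J x M)
  then show ?case by (auto intro: a_twhere)
next
  case (e1_j y L x M N)
  then show ?case by (auto intro: e1_t)
qed (auto intro: eq_t_eq_j.intros)

text \<open>Testing the flattened jump, not \<open>J\<close> itself, makes the contraction of
\<open>\<mu>k.J\<close> invariant under (E3).\<close>

definition mu_contract :: "cvar \<Rightarrow> jmp \<Rightarrow> trm" where
  "mu_contract k J =
     (if jtarget J = k \<and> k \<notin> fcv_t (jbody J) then jbody J else Mu k J)"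

primrec vnf_t :: "trm \<Rightarrow> trm" and vnf_j :: "jmp \<Rightarrow> jmp" where
  "vnf_t (Var x) = Var x"
| "vnf_t (Lam x M) = Lam x (vnf_t M)"
| "vnf_t (App M N) = App (vnf_t M) (vnf_t N)"
| "vnf_t (TWhere L x M) = TWhere (vnf_t L) x (vnf_t M)"
| "vnf_t (Mu k J) = mu_contract k (vnf_j J)"
| "vnf_j (Jmp k M) = Jmp k (vnf_t M)"
| "vnf_j (JWhere J x M) = JWhere (vnf_j J) x (vnf_t M)"

lemma mu_contract_eq: "eq_j J K \<Longrightarrow> eq_t (mu_contract k J) (mu_contract k K)"
  using eq_j_jtarget_jbody[of J K] fcv_eq(1)[of "jbody J" "jbody K"]
  by (auto simp: mu_contract_def intro: c_mu)

lemma mu_contract_alpha: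
  assumes "l \<notin> fcv_j J - {k}"
  shows "eq_t (mu_contract k J) (mu_contract l (cswp_j k l J))"
proof (cases "jtarget J = k \<and> k \<notin> fcv_t (jbody J)")
  case True
  moreover from this assms fcv_jbody[of J] have "l \<notin> fcv_t (jbody J)" by auto
  ultimately show ?thesis
    by (auto simp: mu_contract_def fcv_cswp sw_def intro: eq_cswp_fresh)
next
  case False
  then have "\<not> (sw k l (jtarget J) = l \<and> l \<notin> sw k l ` fcv_t (jbody J))"
    by (auto simp: sw_def split: if_splits)
  with False assms show ?thesis
    by (auto simp: mu_contract_def fcv_cswp intro: a_mu)
qed

lemma mu_contract_e2:
  "k \<notin> fcv_t M \<Longrightarrow> eq_t (TWhere (mu_contract k J) x M) (mu_contract k (JWhere J x M))"
  by (auto simp: mu_contract_def intro: t_refl e2)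

lemma vnf_swp: "vnf_t (swp_t a b M) = swp_t a b (vnf_t M)" "vnf_j (swp_j a b J) = swp_j a b (vnf_j J)"
  by (induct M and J) (auto simp: mu_contract_def)

lemma vnf_cswp: "vnf_t (cswp_t a b M) = cswp_t a b (vnf_t M)" "vnf_j (cswp_j a b J) = cswp_j a b (vnf_j J)"
  by (induct M and J) (auto simp: mu_contract_def fcv_cswp)

lemma fv_vnf: "fv_t (vnf_t M) \<subseteq> fv_t M" "fv_j (vnf_j J) \<subseteq> fv_j J"
  by (induct M and J) (auto simp: mu_contract_def)

lemma fcv_vnf: "fcv_t (vnf_t M) \<subseteq> fcv_t M" "fcv_j (vnf_j J) \<subseteq> fcv_j J"
proof (induct M and J)
  case (Mu k J)
  then show ?case using fcv_jbody[of "vnf_j J"] by (auto simp: mu_contract_def)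
qed auto

lemma vnf_eq: "eq_t M N \<Longrightarrow> eq_t (vnf_t M) (vnf_t N)" "eq_j J K \<Longrightarrow> eq_j (vnf_j J) (vnf_j K)"
proof (induct rule: eq_t_eq_j.inducts)
  case (a_mu l J k)
  then show ?case using fcv_vnf(2)[of J] mu_contract_alpha[of l "vnf_j J" k]
    by (auto simp: vnf_cswp)
next
  case (e2 k M J x)
  then show ?case using fcv_vnf(1)[of M] by (auto intro: mu_contract_e2)
next
  case (a_lam y M x)
  then show ?case using fv_vnf(1)[of M] by (auto simp: vnf_swp intro!: eq_t_eq_j.a_lam)
next
  case (a_twhere y L x M)
  then show ?case using fv_vnf(1)[of L] by (auto simp: vnf_swp intro!: eq_t_eq_j.a_twhere)
next
  case (a_jwhere y J x M)
  then show ?case using fv_vnf(2)[of J] by (auto simp: vnf_swp intro!: eq_t_eq_j.a_jwhere)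
next
  case (e1_t y L x M N)
  then show ?case using fv_vnf(1)[of L] by (auto intro: eq_t_eq_j.e1_t)
next
  case (e1_j y L x M N)
  then show ?case using fv_vnf(2)[of L] by (auto intro: eq_t_eq_j.e1_j)
qed (auto simp: mu_contract_eq intro: eq_t_eq_j.intros)

lemma vnf_vstep: "vstep_t M N \<Longrightarrow> eq_t (vnf_t M) (vnf_t N)" "vstep_j J K \<Longrightarrow> eq_j (vnf_j J) (vnf_j K)"
proof (induct rule: vstep_t_vstep_j.inducts)
  case (v_root k M)
  then show ?case using fcv_vnf(1)[of M] by (auto simp: mu_contract_def intro: t_refl)
qed (auto simp: mu_contract_eq intro: eq_t_eq_j.intros)

definition vred_or_eq_t :: "trm \<Rightarrow> trm \<Rightarrow> bool" where
  "vred_or_eq_t M N \<longleftrightarrow> eq_t M N \<or> vred_t M N"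

definition vred_or_eq_j :: "jmp \<Rightarrow> jmp \<Rightarrow> bool" where
  "vred_or_eq_j J K \<longleftrightarrow> eq_j J K \<or> vred_j J K"

lemma vreds_t_eq_rtranclp: "vreds_t = vred_or_eq_t\<^sup>*\<^sup>*"
  unfolding vreds_t_def vred_or_eq_t_def by simp

lemma vreds_j_eq_rtranclp: "vreds_j = vred_or_eq_j\<^sup>*\<^sup>*"
  unfolding vreds_j_def vred_or_eq_j_def by simp

lemma vred_or_eq_congs:
  "vred_or_eq_t M M' \<Longrightarrow> vred_or_eq_t (Lam x M) (Lam x M')"
  "vred_or_eq_t M M' \<Longrightarrow> vred_or_eq_t (App M N) (App M' N)"
  "vred_or_eq_t N N' \<Longrightarrow> vred_or_eq_t (App M N) (App M N')"
  "vred_or_eq_t L L' \<Longrightarrow> vred_or_eq_t (TWhere L x M) (TWhere L' x M)"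
  "vred_or_eq_t M M' \<Longrightarrow> vred_or_eq_t (TWhere L x M) (TWhere L x M')"
  "vred_or_eq_j J J' \<Longrightarrow> vred_or_eq_t (Mu k J) (Mu k J')"
  "vred_or_eq_t M M' \<Longrightarrow> vred_or_eq_j (Jmp k M) (Jmp k M')"
  "vred_or_eq_j J J' \<Longrightarrow> vred_or_eq_j (JWhere J x M) (JWhere J' x M)"
  "vred_or_eq_t M M' \<Longrightarrow> vred_or_eq_j (JWhere J x M) (JWhere J x M')"
  unfolding vred_or_eq_t_def vred_or_eq_j_def vred_t_def vred_j_def
  by (blast intro: eq_t_eq_j.intros vstep_t_vstep_j.intros)+

lemma vreds_congs:
  "vred_or_eq_t\<^sup>*\<^sup>* M M' \<Longrightarrow> vred_or_eq_t\<^sup>*\<^sup>* (Lam x M) (Lam x M')"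
  "vred_or_eq_t\<^sup>*\<^sup>* M M' \<Longrightarrow> vred_or_eq_t\<^sup>*\<^sup>* (App M N) (App M' N)"
  "vred_or_eq_t\<^sup>*\<^sup>* N N' \<Longrightarrow> vred_or_eq_t\<^sup>*\<^sup>* (App M N) (App M N')"
  "vred_or_eq_t\<^sup>*\<^sup>* L L' \<Longrightarrow> vred_or_eq_t\<^sup>*\<^sup>* (TWhere L x M) (TWhere L' x M)"
  "vred_or_eq_t\<^sup>*\<^sup>* M M' \<Longrightarrow> vred_or_eq_t\<^sup>*\<^sup>* (TWhere L x M) (TWhere L x M')"
  "vred_or_eq_j\<^sup>*\<^sup>* J J' \<Longrightarrow> vred_or_eq_t\<^sup>*\<^sup>* (Mu k J) (Mu k J')"
  "vred_or_eq_t\<^sup>*\<^sup>* M M' \<Longrightarrow> vred_or_eq_j\<^sup>*\<^sup>* (Jmp k M) (Jmp k M')"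
  "vred_or_eq_j\<^sup>*\<^sup>* J J' \<Longrightarrow> vred_or_eq_j\<^sup>*\<^sup>* (JWhere J x M) (JWhere J' x M)"
  "vred_or_eq_t\<^sup>*\<^sup>* M M' \<Longrightarrow> vred_or_eq_j\<^sup>*\<^sup>* (JWhere J x M) (JWhere J x M')"
  by (induct rule: rtranclp_induct; blast intro: rtranclp.rtrancl_into_rtrancl vred_or_eq_congs)+

lemma reduces_to_vnf: "vred_or_eq_t\<^sup>*\<^sup>* M (vnf_t M)" "vred_or_eq_j\<^sup>*\<^sup>* J (vnf_j J)"
proof (induct M and J)
  case (Mu k J)
  let ?J = "vnf_j J"
  have "vred_or_eq_t\<^sup>*\<^sup>* (Mu k J) (Mu k ?J)"
    using Mu vreds_congs(6)[of J ?J k] by simp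
  moreover have "vred_or_eq_t (Mu k ?J) (jbody ?J)" if "jtarget ?J = k" "k \<notin> fcv_t (jbody ?J)"
  proof -
    have "eq_t (Mu k ?J) (Mu k (Jmp k (jbody ?J)))"
      using that eq_j_Jmp_jtarget_jbody[of ?J] by (auto intro: c_mu)
    moreover have "vstep_t (Mu k (Jmp k (jbody ?J))) (jbody ?J)"
      using that(2) by (rule v_root)
    ultimately show ?thesis
      unfolding vred_or_eq_t_def vred_t_def by (blast intro: t_refl)
  qed
  ultimately show ?case by (auto simp: mu_contract_def)
next
  case (App M N)
  then show ?case by (metis vnf_t.simps(3) vreds_congs(2,3) rtranclp_trans)
next
  case (TWhere L x M)
  then show ?case by (metis vnf_t.simps(4) vreds_congs(4,5) rtranclp_trans)
next
  case (JWhere J x M)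
  then show ?case by (metis vnf_j.simps(2) vreds_congs(8,9) rtranclp_trans)
qed (auto intro: vreds_congs(1,7))

lemma equivp_eq_t: "equivp eq_t"
  by (metis equivpI reflpI sympI transpI t_refl t_sym t_trans)

lemma equivp_eq_j: "equivp eq_j"
  by (metis equivpI reflpI sympI transpI j_refl j_sym j_trans)

lemma vnf_vred_or_eq_t: "vred_or_eq_t M N \<Longrightarrow> eq_t (vnf_t M) (vnf_t N)"
  unfolding vred_or_eq_t_def vred_t_def
  by (elim disjE exE conjE) (metis vnf_eq(1) vnf_vstep(1) t_trans)+

lemma vnf_vred_or_eq_j: "vred_or_eq_j J K \<Longrightarrow> eq_j (vnf_j J) (vnf_j K)"
  unfolding vred_or_eq_j_def vred_j_def
  by (elim disjE exE conjE) (metis vnf_eq(2) vnf_vstep(2) j_trans)+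

lemma confluent_vreds_t: "confluent vreds_t"
  unfolding vreds_t_eq_rtranclp
  by (rule confluent_rtranclp_if_normalizing[OF reduces_to_vnf(1) vnf_vred_or_eq_t equivp_eq_t])
    (simp_all add: vred_or_eq_t_def)

lemma confluent_vreds_j: "confluent vreds_j"
  unfolding vreds_j_eq_rtranclp
  by (rule confluent_rtranclp_if_normalizing[OF reduces_to_vnf(2) vnf_vred_or_eq_j equivp_eq_j])
    (simp_all add: vred_or_eq_j_def)

theorem lemma1p21:
  shows "SN vred_t \<and> SN vred_j \<and> confluent vreds_t \<and> confluent vreds_j"
  using SN_vred_t SN_vred_j confluent_vreds_t confluent_vreds_j by blast

end
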